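(* Let $X$ be a real Banach space whose norm is Fréchet differentiable and let $(S,\mu)$ be a complete, $\sigma$-finite positive measure space. Let $f\in L^1(\mu,X)$ be a smooth point of $L^1(\mu,X)$ such that $Z(f)^c=\{s\in S:f(s)\neq0\}$ is an atom and $f(s)$ is a left symmetric point of $X$ for each $s\in S$. Then $f$ is a left symmetric point of $L^1(\mu,X)$.
   Context: $L^1(\mu,X)$ is the Lebesgue–Bochner space of (classes of a.e. equal) strongly measurable $f:S\to X$ with $\|f\|=\int_S\|f(s)\|\,d\mu(s)<\infty$; $Z(f)=\{s:f(s)=0\}$. In a real normed space $Y$, $x\perp_{BJ}y$ means $\|x+\lambda y\|\ge\|x\|$ for all $\lambda\in\mathbb{R}$; $x$ is a left symmetric point if $x\perp_{BJ}y$ implies $y\perp_{BJ}x$ for all $y\in Y$. A non-zero $x$ is smooth if there is a unique norm-one $F\in Y^*$ with $F(x)=\|x\|$. The norm of $X$ is Fréchet differentiable if for every non-zero $x$ there is $\varphi\in X^*$ with $\lim_{h\to0}\big|\|x+h\|-\|x\|-\varphi(h)\big|/\|h\|=0$. A measurable set $A$ is an atom if $\mu(A)>0$ and every measurable $B\subseteq A$ has $\mu(B)=0$ or $\mu(B)=\mu(A)$. *)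

theory Defs
  imports "HOL-Analysis.Analysis"
begin

definition bj_orth :: "'x::real_normed_vector \<Rightarrow> 'x \<Rightarrow> bool" where
  "bj_orth x y \<longleftrightarrow> (\<forall>t::real. norm (x + t *\<^sub>R y) \<ge> norm x)"

definition left_symmetric :: "'x::real_normed_vector \<Rightarrow> bool" where
  "left_symmetric x \<longleftrightarrow> (\<forall>y. bj_orth x y \<longrightarrow> bj_orth y x)"

definition frechet_diff_norm :: "'x::real_normed_vector itself \<Rightarrow> bool" where
  "frechet_diff_norm _ \<longleftrightarrow> (\<forall>x::'x. x \<noteq> 0 \<longrightarrow> norm differentiable (at x))"

definition is_atom :: "'s measure \<Rightarrow> 's set \<Rightarrow> bool" where
  "is_atom M A \<longleftrightarrow> A \<in> sets M \<and> emeasure M A > 0 \<and>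
     (\<forall>B\<in>sets M. B \<subseteq> A \<longrightarrow> emeasure M B = 0 \<or> emeasure M B = emeasure M A)"

definition strongly_measurable :: "'s measure \<Rightarrow> ('s \<Rightarrow> 'x::real_normed_vector) \<Rightarrow> bool" where
  "strongly_measurable M f \<longleftrightarrow>
     (\<exists>u::nat \<Rightarrow> 's \<Rightarrow> 'x.
        (\<forall>n. finite (u n ` space M) \<and> (\<forall>x. u n -` {x} \<inter> space M \<in> sets M)) \<and>
        (AE s in M. (\<lambda>n. u n s) \<longlonglongrightarrow> f s))"

definition L1 :: "'s measure \<Rightarrow> ('s \<Rightarrow> 'x::real_normed_vector) set" where
  "L1 M = {f. strongly_measurable M f \<and> (\<integral>\<^sup>+ s. ennreal (norm (f s)) \<partial>M) < \<infinity>}"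

definition L1norm :: "'s measure \<Rightarrow> ('s \<Rightarrow> 'x::real_normed_vector) \<Rightarrow> real" where
  "L1norm M f = enn2real (\<integral>\<^sup>+ s. ennreal (norm (f s)) \<partial>M)"

definition L1_orth :: "'s measure \<Rightarrow> ('s \<Rightarrow> 'x::real_normed_vector) \<Rightarrow> ('s \<Rightarrow> 'x) \<Rightarrow> bool" where
  "L1_orth M f g \<longleftrightarrow> (\<forall>t::real. L1norm M (\<lambda>s. f s + t *\<^sub>R g s) \<ge> L1norm M f)"

definition L1_left_symmetric :: "'s measure \<Rightarrow> ('s \<Rightarrow> 'x::real_normed_vector) \<Rightarrow> bool" where
  "L1_left_symmetric M f \<longleftrightarrow> (\<forall>g\<in>L1 M. L1_orth M f g \<longrightarrow> L1_orth M g f)"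

text \<open>Continuous linear functionals on L^1 (given by their values on representatives).\<close>
definition L1_dual :: "'s measure \<Rightarrow> (('s \<Rightarrow> 'x::real_normed_vector) \<Rightarrow> real) set" where
  "L1_dual M = {F. (\<forall>g\<in>L1 M. \<forall>h\<in>L1 M. F (\<lambda>s. g s + h s) = F g + F h) \<and>
                   (\<forall>g\<in>L1 M. \<forall>c::real. F (\<lambda>s. c *\<^sub>R g s) = c * F g) \<and>
                   (\<exists>K. \<forall>g\<in>L1 M. \<bar>F g\<bar> \<le> K * L1norm M g)}"

definition L1_dual_norm :: "'s measure \<Rightarrow> (('s \<Rightarrow> 'x::real_normed_vector) \<Rightarrow> real) \<Rightarrow> real" where
  "L1_dual_norm M F = Sup {\<bar>F g\<bar> | g. g \<in> L1 M \<and> L1norm M g \<le> 1}"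

definition L1_norming :: "'s measure \<Rightarrow> ('s \<Rightarrow> 'x::real_normed_vector) \<Rightarrow> (('s \<Rightarrow> 'x) \<Rightarrow> real) \<Rightarrow> bool" where
  "L1_norming M f F \<longleftrightarrow> F \<in> L1_dual M \<and> L1_dual_norm M F = 1 \<and> F f = L1norm M f"

text \<open>Smooth point: non-zero element of L^1 with a unique norming functional
  (uniqueness as functionals on L^1, i.e. agreement on all of L^1).\<close>
definition L1_smooth :: "'s measure \<Rightarrow> ('s \<Rightarrow> 'x::real_normed_vector) \<Rightarrow> bool" where
  "L1_smooth M f \<longleftrightarrow> f \<in> L1 M \<and> L1norm M f \<noteq> 0 \<and>
     (\<exists>F. L1_norming M f F) \<and>
     (\<forall>F G. L1_norming M f F \<longrightarrow> L1_norming M f G \<longrightarrow> (\<forall>g\<in>L1 M. F g = G g))"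

end

theory Submission
  imports Defs
begin

(*
  Let A = {s. f s \<noteq> 0}. By sigma-finiteness the atom A has finite measure, and strongly
  measurable functions are a.e. constant on it, so f = 1_A x a.e. Smoothness forces the
  complement of A to be null: if F norms f, then phi = F(1_A _) / mu(A) is a functional on X of
  norm at most one with phi x = |x|, and since the L^1 norm splits over A and S - A, both
  g \<mapsto> F(1_A g) + int_{S-A} phi(g) and g \<mapsto> F(1_A g) - int_{S-A} phi(g) norm f. By uniqueness
  int_{S-A} phi(g) = 0 for every g, which fails for g = 1_B x with B a subset of S - A of finite
  positive measure.
  So every element of L^1(mu, X) is a.e. a constant, the L^1 norm is mu(A) times the norm of that
  constant, and Birkhoff-James orthogonality in L^1 is that of the constants in X; left symmetry of
  x = f(s) therefore transfers to f.
*)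

section \<open>Strongly measurable functions\<close>

lemma simple_function_iff_preimages:
  "simple_function M u \<longleftrightarrow> finite (u ` space M) \<and> (\<forall>x. u -` {x} \<inter> space M \<in> sets M)"
proof
  assume u: "simple_function M u"
  show "finite (u ` space M) \<and> (\<forall>x. u -` {x} \<inter> space M \<in> sets M)"
  proof (intro conjI allI)
    fix x
    show "u -` {x} \<inter> space M \<in> sets M"
    proof (cases "x \<in> u ` space M")
      case False
      then have "u -` {x} \<inter> space M = {}" by auto
      then show ?thesis by simp
    qed (use u in \<open>auto simp: simple_function_def\<close>)
  qed (use u in \<open>simp add: simple_function_def\<close>)
qed (auto simp: simple_function_def)

lemma strongly_measurable_iff_simple_function:
  "strongly_measurable M f \<longleftrightarrow>
     (\<exists>u. (\<forall>n. simple_function M (u n)) \<and> (AE s in M. (\<lambda>n. u n s) \<longlonglongrightarrow> f s))"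
  unfolding strongly_measurable_def simple_function_iff_preimages ..

lemma strongly_measurable_const: "strongly_measurable M (\<lambda>s. c)"
  unfolding strongly_measurable_iff_simple_function by (intro exI[of _ "\<lambda>n s. c"]) auto

lemma strongly_measurable_add:
  assumes "strongly_measurable M f" "strongly_measurable M g"
  shows "strongly_measurable M (\<lambda>s. f s + g s)"
proof -
  obtain u where u: "\<And>n. simple_function M (u n)" "AE s in M. (\<lambda>n. u n s) \<longlonglongrightarrow> f s"
    using assms(1) unfolding strongly_measurable_iff_simple_function by blast
  obtain v where v: "\<And>n. simple_function M (v n)" "AE s in M. (\<lambda>n. v n s) \<longlonglongrightarrow> g s"
    using assms(2) unfolding strongly_measurable_iff_simple_function by blast
  have "simple_function M (\<lambda>s. u n s + v n s)" for n
    using u(1) v(1) by (rule simple_function_compose2)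
  moreover have "AE s in M. (\<lambda>n. u n s + v n s) \<longlonglongrightarrow> f s + g s"
    using u(2) v(2) by eventually_elim (rule tendsto_add)
  ultimately show ?thesis
    unfolding strongly_measurable_iff_simple_function by (intro exI[of _ "\<lambda>n s. u n s + v n s"]) auto
qed

lemma strongly_measurable_simple_scaleR:
  assumes "simple_function M c" "strongly_measurable M f"
  shows "strongly_measurable M (\<lambda>s. c s *\<^sub>R f s)"
proof -
  obtain u where u: "\<And>n. simple_function M (u n)" "AE s in M. (\<lambda>n. u n s) \<longlonglongrightarrow> f s"
    using assms(2) unfolding strongly_measurable_iff_simple_function by blast
  have "simple_function M (\<lambda>s. c s *\<^sub>R u n s)" for n
    using assms(1) u(1) by (rule simple_function_compose2)
  moreover have "AE s in M. (\<lambda>n. c s *\<^sub>R u n s) \<longlonglongrightarrow> c s *\<^sub>R f s"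
    using u(2) by eventually_elim (rule tendsto_scaleR[OF tendsto_const])
  ultimately show ?thesis
    unfolding strongly_measurable_iff_simple_function by (intro exI[of _ "\<lambda>n s. c s *\<^sub>R u n s"]) auto
qed

context complete_measure
begin

lemma borel_measurable_AE_eq:
  assumes f: "f \<in> borel_measurable M" and ae: "AE x in M. f x = g x"
  shows "g \<in> borel_measurable M"
proof (rule borel_measurableI)
  define N where "N = {x \<in> space M. f x \<noteq> g x}"
  have N: "N \<in> null_sets M"
    using ae unfolding AE_iff_null_sets N_def by simp
  fix S :: "'b set"
  assume "open S"
  have "g -` S \<inter> space M = (f -` S \<inter> space M - N) \<union> (g -` S \<inter> N)"
    by (auto simp: N_def)
  moreover have "f -` S \<inter> space M \<in> sets M"
    using f \<open>open S\<close> by (simp add: borel_open measurable_sets)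
  moreover have "g -` S \<inter> N \<in> sets M"
    using N by (intro complete[of _ N]) auto
  ultimately show "g -` S \<inter> space M \<in> sets M"
    using N by auto
qed

lemma borel_measurable_AE_LIMSEQ:
  fixes u :: "nat \<Rightarrow> 'a \<Rightarrow> 'b::{banach, second_countable_topology}"
  assumes "\<And>n. u n \<in> borel_measurable M" and "AE x in M. (\<lambda>n. u n x) \<longlonglongrightarrow> g x"
  shows "g \<in> borel_measurable M"
proof (rule borel_measurable_AE_eq)
  show "(\<lambda>x. lim (\<lambda>n. u n x)) \<in> borel_measurable M"
    using assms(1) by (rule borel_measurable_lim_metric)
  show "AE x in M. lim (\<lambda>n. u n x) = g x"
    using assms(2) by eventually_elim (rule limI)
qed

lemma borel_measurable_strongly_measurable_comp:
  fixes \<phi> :: "'x::real_normed_vector \<Rightarrow> 'b::{banach, second_countable_topology}"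
  assumes "strongly_measurable M k" and "\<And>v. isCont \<phi> v"
  shows "(\<lambda>s. \<phi> (k s)) \<in> borel_measurable M"
proof -
  obtain u where u: "\<And>n. simple_function M (u n)" "AE s in M. (\<lambda>n. u n s) \<longlonglongrightarrow> k s"
    using assms(1) unfolding strongly_measurable_iff_simple_function by blast
  have "simple_function M (\<lambda>s. \<phi> (u n s))" for n
    using simple_function_compose[OF u(1), of \<phi>] by (simp add: comp_def)
  then show ?thesis
  proof (rule borel_measurable_AE_LIMSEQ[OF borel_measurable_simple_function])
    show "AE s in M. (\<lambda>n. \<phi> (u n s)) \<longlonglongrightarrow> \<phi> (k s)"
      using u(2) by eventually_elim (rule isCont_tendsto_compose[OF assms(2)])
  qed
qed

end

section \<open>Atoms\<close>

lemma (in sigma_finite_measure) obtain_finite_positive_subset: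
  assumes C: "C \<in> sets M" and pos: "emeasure M C > 0"
  obtains B where "B \<in> sets M" "B \<subseteq> C" "emeasure M B > 0" "emeasure M B < \<infinity>"
proof -
  obtain E :: "nat \<Rightarrow> 'a set"
    where E: "range E \<subseteq> sets M" "(\<Union>i. E i) = space M" "\<And>i. emeasure M (E i) \<noteq> \<infinity>"
    using sigma_finite by blast
  have fin: "emeasure M (C \<inter> E i) < \<infinity>" for i
  proof -
    have "emeasure M (C \<inter> E i) \<le> emeasure M (E i)"
      using E(1) by (intro emeasure_mono) auto
    from order.strict_trans1[OF this] show ?thesis
      using E(3)[of i] by (simp add: less_top)
  qed
  have "\<exists>i. emeasure M (C \<inter> E i) \<noteq> 0"
  proof (rule ccontr)
    assume "\<nexists>i. emeasure M (C \<inter> E i) \<noteq> 0"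
    then have "emeasure M (\<Union>i. C \<inter> E i) = 0"
      using C E(1) by (intro emeasure_UN_eq_0) auto
    moreover have "(\<Union>i. C \<inter> E i) = C"
      using E(2) sets.sets_into_space[OF C] by blast
    ultimately show False
      using pos by simp
  qed
  then obtain i where "emeasure M (C \<inter> E i) > 0"
    by (auto simp: zero_less_iff_neq_zero)
  moreover have "C \<inter> E i \<in> sets M"
    using C E(1) by auto
  ultimately show thesis
    using that[of "C \<inter> E i"] fin by blast
qed

lemma (in sigma_finite_measure) atom_finite_measure:
  assumes atom: "is_atom M A"
  shows "emeasure M A < \<infinity>"
proof -
  have A: "A \<in> sets M" "emeasure M A > 0"
    using atom unfolding is_atom_def by auto
  then obtain B where B: "B \<in> sets M" "B \<subseteq> A" "emeasure M B > 0" "emeasure M B < \<infinity>"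
    by (rule obtain_finite_positive_subset)
  then have "emeasure M B = emeasure M A"
    using atom unfolding is_atom_def by auto
  with B(4) show ?thesis
    by simp
qed

lemma AE_imp_ex_in:
  assumes "AE s in M. P s" and A: "A \<in> sets M" "emeasure M A > 0"
  shows "\<exists>s\<in>A. P s"
proof (rule ccontr)
  assume none: "\<not> (\<exists>s\<in>A. P s)"
  have "AE s in M. s \<notin> A"
    using assms(1) by eventually_elim (use none in auto)
  then have "A \<in> null_sets M"
    using AE_iff_null_sets[OF A(1)] by simp
  with A(2) show False
    by (simp add: null_sets_def)
qed

lemma atom_simple_function_AE_const:
  assumes atom: "is_atom M A" and fin: "emeasure M A < \<infinity>" and u: "simple_function M u"
  shows "\<exists>c. AE s in M. s \<in> A \<longrightarrow> u s = c"
proof -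
  have A: "A \<in> sets M" "emeasure M A > 0" and A_space: "A \<subseteq> space M"
    using atom sets.sets_into_space unfolding is_atom_def by auto
  define P where "P c = A \<inter> (u -` {c} \<inter> space M)" for c
  have P: "P c \<in> sets M" for c
    using u A(1) unfolding P_def simple_function_iff_preimages by blast
  have "finite (u ` A)"
    using finite_subset[OF image_mono[OF A_space] simple_functionD(1)[OF u]] .
  have "\<exists>c. P c \<notin> null_sets M"
  proof (rule ccontr)
    assume "\<nexists>c. P c \<notin> null_sets M"
    then have "(\<Union>c\<in>u ` A. P c) \<in> null_sets M"
      using \<open>finite (u ` A)\<close> by (intro null_sets_UN') (auto intro: countable_finite)
    moreover have "(\<Union>c\<in>u ` A. P c) = A"
      using A_space unfolding P_def by auto
    ultimately show False
      using A(2) by (simp add: null_sets_def)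
  qed
  then obtain c where "P c \<notin> null_sets M" ..
  then have "emeasure M (P c) \<noteq> 0"
    using P[of c] by (simp add: null_sets_def)
  moreover have P_sub: "P c \<subseteq> A"
    unfolding P_def by blast
  ultimately have P_eq: "emeasure M (P c) = emeasure M A"
    using atom P[of c] unfolding is_atom_def by blast
  have "emeasure M (A - P c) = emeasure M A - emeasure M (P c)"
    using fin P_eq by (intro emeasure_Diff A(1) P P_sub) simp
  then have "A - P c \<in> null_sets M"
    using fin P_eq A(1) P[of c] by (intro null_setsI) auto
  then have "AE s in M. s \<notin> A - P c"
    by (rule AE_not_in)
  then have "AE s in M. s \<in> A \<longrightarrow> u s = c"
    using AE_space by eventually_elim (simp add: P_def)
  then show ?thesis ..
qed

lemma atom_strongly_measurable_AE_const:
  assumes atom: "is_atom M A" and fin: "emeasure M A < \<infinity>" and g: "strongly_measurable M g"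
  shows "\<exists>c. AE s in M. s \<in> A \<longrightarrow> g s = c"
proof -
  have A: "A \<in> sets M" "emeasure M A > 0"
    using atom unfolding is_atom_def by auto
  obtain u where u: "\<And>n. simple_function M (u n)" "AE s in M. (\<lambda>n. u n s) \<longlonglongrightarrow> g s"
    using g unfolding strongly_measurable_iff_simple_function by blast
  obtain c where c: "\<And>n. AE s in M. s \<in> A \<longrightarrow> u n s = c n"
    using atom_simple_function_AE_const[OF atom fin u(1)] by metis
  have "AE s in M. \<forall>n. s \<in> A \<longrightarrow> u n s = c n"
    by (subst AE_all_countable) (use c in blast)
  with u(2) have ae: "AE s in M. s \<in> A \<longrightarrow> c \<longlonglongrightarrow> g s"
    by eventually_elim (auto simp: fun_eq_iff[symmetric])
  obtain s0 where "s0 \<in> A" "c \<longlonglongrightarrow> g s0"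
    using AE_imp_ex_in[OF ae A] by blast
  have "AE s in M. s \<in> A \<longrightarrow> g s = g s0"
    using ae by eventually_elim (use \<open>c \<longlonglongrightarrow> g s0\<close> in \<open>auto intro: LIMSEQ_unique\<close>)
  then show ?thesis ..
qed

lemma strongly_measurable_AE_const_conull_atom:
  assumes "is_atom M A" and "emeasure M A < \<infinity>" and "AE s in M. s \<in> A"
    and "strongly_measurable M g"
  shows "\<exists>c. AE s in M. g s = c"
proof -
  obtain c where "AE s in M. s \<in> A \<longrightarrow> g s = c"
    using atom_strongly_measurable_AE_const[OF assms(1,2,4)] ..
  with assms(3) have "AE s in M. g s = c"
    by eventually_elim blast
  then show ?thesis ..
qed

section \<open>The space L1\<close>

lemma L1I:
  assumes "strongly_measurable M k" and "integrable M (\<lambda>s. norm (k s))"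
  shows "k \<in> L1 M"
  using assms unfolding integrable_iff_bounded L1_def by simp

lemma L1norm_nonneg: "L1norm M k \<ge> 0"
  unfolding L1norm_def by simp

lemma L1norm_cong_AE:
  assumes "AE s in M. g s = h s"
  shows "L1norm M g = L1norm M h"
proof -
  have "AE s in M. ennreal (norm (g s)) = ennreal (norm (h s))"
    using assms by eventually_elim simp
  then have "(\<integral>\<^sup>+ s. ennreal (norm (g s)) \<partial>M) = (\<integral>\<^sup>+ s. ennreal (norm (h s)) \<partial>M)"
    by (rule nn_integral_cong_AE)
  then show ?thesis
    unfolding L1norm_def by simp
qed

lemma L1norm_indicator_const:
  assumes "A \<in> sets M" and "emeasure M A < \<infinity>"
  shows "L1norm M (\<lambda>s. indicator A s *\<^sub>R v) = measure M A * norm v"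
proof -
  have "(\<integral>\<^sup>+ s. ennreal (norm (indicator A s *\<^sub>R v)) \<partial>M) = (\<integral>\<^sup>+ s. ennreal (norm v) * indicator A s \<partial>M)"
    by (intro nn_integral_cong) (simp split: split_indicator)
  also have "\<dots> = ennreal (norm v) * emeasure M A"
    using assms(1) by (rule nn_integral_cmult_indicator)
  also have "\<dots> = ennreal (measure M A * norm v)"
    using assms by (simp add: emeasure_eq_ennreal_measure less_top ennreal_mult mult.commute)
  finally show ?thesis
    unfolding L1norm_def by simp
qed

lemma L1norm_AE_const:
  assumes "AE s in M. h s = v" and "emeasure M (space M) < \<infinity>"
  shows "L1norm M h = measure M (space M) * norm v"
proof -
  have "AE s in M. h s = indicator (space M) s *\<^sub>R v"
    using assms(1) AE_space by eventually_elim simp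
  then show ?thesis
    using L1norm_cong_AE L1norm_indicator_const[OF sets.top assms(2)] by metis
qed

context complete_measure
begin

lemma borel_measurable_norm_L1:
  "k \<in> L1 M \<Longrightarrow> (\<lambda>s. norm (k s)) \<in> borel_measurable M"
  unfolding L1_def by (auto intro: borel_measurable_strongly_measurable_comp continuous_norm)

lemma integrable_norm_L1: "k \<in> L1 M \<Longrightarrow> integrable M (\<lambda>s. norm (k s))"
  unfolding integrable_iff_bounded using borel_measurable_norm_L1 by (simp add: L1_def)

lemma L1norm_eq_integral: "k \<in> L1 M \<Longrightarrow> L1norm M k = (\<integral>s. norm (k s) \<partial>M)"
  unfolding L1norm_def by (simp add: nn_integral_eq_integral integrable_norm_L1)

lemma L1_add:
  assumes "g \<in> L1 M" and "h \<in> L1 M"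
  shows "(\<lambda>s. g s + h s) \<in> L1 M"
proof (rule L1I)
  show sm: "strongly_measurable M (\<lambda>s. g s + h s)"
    using assms by (intro strongly_measurable_add) (auto simp: L1_def)
  show "integrable M (\<lambda>s. norm (g s + h s))"
  proof (rule Bochner_Integration.integrable_bound)
    show "integrable M (\<lambda>s. norm (g s) + norm (h s))"
      using assms by (intro Bochner_Integration.integrable_add integrable_norm_L1)
    show "(\<lambda>s. norm (g s + h s)) \<in> borel_measurable M"
      using sm by (auto intro: borel_measurable_strongly_measurable_comp continuous_norm)
  qed (simp add: norm_triangle_ineq)
qed

lemma L1_scaleR:
  assumes "k \<in> L1 M"
  shows "(\<lambda>s. c *\<^sub>R k s) \<in> L1 M"
proof (rule L1I)
  show "strongly_measurable M (\<lambda>s. c *\<^sub>R k s)"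
    using assms by (intro strongly_measurable_simple_scaleR) (auto simp: L1_def)
  show "integrable M (\<lambda>s. norm (c *\<^sub>R k s))"
    using integrable_norm_L1[OF assms] by simp
qed

lemma L1_indicator_scaleR:
  assumes "k \<in> L1 M" and "A \<in> sets M"
  shows "(\<lambda>s. indicator A s *\<^sub>R k s) \<in> L1 M"
proof (rule L1I)
  show "strongly_measurable M (\<lambda>s. indicator A s *\<^sub>R k s)"
    using assms by (intro strongly_measurable_simple_scaleR) (auto simp: L1_def)
  have "integrable M (\<lambda>s. indicator A s *\<^sub>R norm (k s))"
    using assms by (intro integrable_mult_indicator integrable_norm_L1)
  then show "integrable M (\<lambda>s. norm (indicator A s *\<^sub>R k s))"
    by (simp split: split_indicator)
qed

lemma L1_indicator_const:
  assumes "A \<in> sets M" and "emeasure M A < \<infinity>"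
  shows "(\<lambda>s. indicator A s *\<^sub>R v) \<in> L1 M"
proof (rule L1I)
  show "strongly_measurable M (\<lambda>s. indicator A s *\<^sub>R v)"
    using assms by (intro strongly_measurable_simple_scaleR strongly_measurable_const) auto
  have "integrable M (\<lambda>s. indicator A s * norm v)"
    using assms by simp
  then show "integrable M (\<lambda>s. norm (indicator A s *\<^sub>R v))"
    by (simp split: split_indicator)
qed

lemma L1norm_scaleR: "k \<in> L1 M \<Longrightarrow> L1norm M (\<lambda>s. c *\<^sub>R k s) = \<bar>c\<bar> * L1norm M k"
  by (simp add: L1norm_eq_integral L1_scaleR)

lemma L1norm_indicator_scaleR:
  assumes "k \<in> L1 M" and "A \<in> sets M"
  shows "L1norm M (\<lambda>s. indicator A s *\<^sub>R k s) = (LINT s:A|M. norm (k s))"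
  using assms unfolding set_lebesgue_integral_def
  by (simp add: L1norm_eq_integral L1_indicator_scaleR)

lemma L1norm_split:
  assumes "k \<in> L1 M" and "A \<in> sets M"
  shows "L1norm M k = (LINT s:A|M. norm (k s)) + (LINT s:space M - A|M. norm (k s))"
proof -
  have "set_integrable M B (\<lambda>s. norm (k s))" if "B \<in> sets M" for B
    unfolding set_integrable_def using that assms(1) by (intro integrable_mult_indicator integrable_norm_L1)
  then have "(LINT s:A \<union> (space M - A)|M. norm (k s))
      = (LINT s:A|M. norm (k s)) + (LINT s:space M - A|M. norm (k s))"
    using assms(2) by (intro set_integral_Un) auto
  moreover have "A \<union> (space M - A) = space M"
    using sets.sets_into_space[OF assms(2)] by blast
  ultimately show ?thesis
    using assms(1) by (simp add: L1norm_eq_integral set_integral_space integrable_norm_L1)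
qed

lemma set_integral_norm_le_L1norm:
  assumes "g \<in> L1 M" and "A \<in> sets M"
  shows "(LINT s:A|M. norm (g s)) \<le> L1norm M g"
proof -
  have "0 \<le> (LINT s:space M - A|M. norm (g s))"
    unfolding set_lebesgue_integral_def by simp
  then show ?thesis
    using L1norm_split[OF assms] by simp
qed

end

section \<open>Continuous linear functionals on L1\<close>

lemma L1_dualD:
  assumes "F \<in> L1_dual M"
  shows "g \<in> L1 M \<Longrightarrow> h \<in> L1 M \<Longrightarrow> F (\<lambda>s. g s + h s) = F g + F h"
    and "g \<in> L1 M \<Longrightarrow> F (\<lambda>s. c *\<^sub>R g s) = c * F g"
    and "\<exists>K. \<forall>g\<in>L1 M. \<bar>F g\<bar> \<le> K * L1norm M g"
  using assms unfolding L1_dual_def by blast+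

lemma L1_dual_add:
  assumes F: "F \<in> L1_dual M" and G: "G \<in> L1_dual M"
  shows "(\<lambda>g. F g + G g) \<in> L1_dual M"
proof -
  obtain K L where K: "\<forall>g\<in>L1 M. \<bar>F g\<bar> \<le> K * L1norm M g" and L: "\<forall>g\<in>L1 M. \<bar>G g\<bar> \<le> L * L1norm M g"
    using L1_dualD(3)[OF F] L1_dualD(3)[OF G] by blast
  have "\<bar>F g + G g\<bar> \<le> (K + L) * L1norm M g" if "g \<in> L1 M" for g
  proof -
    have "\<bar>F g\<bar> \<le> K * L1norm M g" "\<bar>G g\<bar> \<le> L * L1norm M g"
      using K L that by blast+
    then show ?thesis
      using abs_triangle_ineq[of "F g" "G g"] by (simp add: distrib_right)
  qed
  then have "\<exists>K. \<forall>g\<in>L1 M. \<bar>F g + G g\<bar> \<le> K * L1norm M g"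
    by blast
  then show ?thesis
    unfolding L1_dual_def by (auto simp: L1_dualD(1,2)[OF F] L1_dualD(1,2)[OF G] distrib_left)
qed

lemma L1_dual_uminus: "F \<in> L1_dual M \<Longrightarrow> (\<lambda>g. - F g) \<in> L1_dual M"
  unfolding L1_dual_def by auto

lemma set_integral_bounded_linear_indicator_const:
  fixes \<phi> :: "'x::real_normed_vector \<Rightarrow> real"
  assumes \<phi>: "bounded_linear \<phi>" and "B \<in> sets M" "C \<in> sets M"
  shows "(LINT s:C|M. \<phi> (indicator B s *\<^sub>R v)) = measure M (B \<inter> C) * \<phi> v"
proof -
  have "(LINT s:C|M. \<phi> (indicator B s *\<^sub>R v)) = (\<integral>s. indicator (B \<inter> C) s * \<phi> v \<partial>M)"
    unfolding set_lebesgue_integral_def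
    by (intro Bochner_Integration.integral_cong)
      (auto simp: linear_0[OF bounded_linear.linear[OF \<phi>]] split: split_indicator)
  also have "\<dots> = measure M (B \<inter> C) * \<phi> v"
    using assms(2,3) sets.sets_into_space[OF assms(3)] by (simp add: Int_absorb2)
  finally show ?thesis .
qed

context complete_measure
begin

lemma L1_dual_cong_AE:
  fixes g h :: "'a \<Rightarrow> 'x::real_normed_vector"
  assumes F: "F \<in> L1_dual M" and g: "g \<in> L1 M" and h: "h \<in> L1 M" and "AE s in M. g s = h s"
  shows "F g = F h"
proof -
  obtain K where K: "\<forall>g\<in>L1 M. \<bar>F g\<bar> \<le> K * L1norm M g"
    using L1_dualD(3)[OF F] by blast
  define d where "d = (\<lambda>s. g s + (-1) *\<^sub>R h s)"
  have d: "d \<in> L1 M"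
    unfolding d_def using g h by (intro L1_add L1_scaleR)
  have "F d = F g + (-1) * F h"
    unfolding d_def by (simp only: L1_dualD(1)[OF F g L1_scaleR[OF h]] L1_dualD(2)[OF F h])
  moreover have "AE s in M. d s = 0"
    using assms(4) by eventually_elim (simp add: d_def)
  then have "L1norm M d = L1norm M (\<lambda>s. 0 :: 'x)"
    by (rule L1norm_cong_AE)
  moreover have "\<bar>F d\<bar> \<le> K * L1norm M d"
    using K d by blast
  ultimately show ?thesis
    by (simp add: L1norm_def)
qed

lemma abs_L1_dual_le:
  assumes F: "F \<in> L1_dual M" and g: "g \<in> L1 M"
  shows "\<bar>F g\<bar> \<le> L1_dual_norm M F * L1norm M g"
proof -
  obtain K where K: "\<And>g. g \<in> L1 M \<Longrightarrow> \<bar>F g\<bar> \<le> K * L1norm M g"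
    using L1_dualD(3)[OF F] by blast
  define S where "S = {\<bar>F g\<bar> | g. g \<in> L1 M \<and> L1norm M g \<le> 1}"
  show ?thesis
  proof (cases "L1norm M g = 0")
    case True
    then show ?thesis using K[OF g] by simp
  next
    case False
    define r where "r = L1norm M g"
    have r: "r > 0" using False L1norm_nonneg[of M g] by (simp add: r_def)
    have "bdd_above S"
    proof (rule bdd_aboveI)
      fix y assume "y \<in> S"
      then obtain h where h: "y = \<bar>F h\<bar>" "h \<in> L1 M" "L1norm M h \<le> 1"
        unfolding S_def by blast
      have "K * L1norm M h \<le> \<bar>K\<bar> * L1norm M h"
        by (simp add: L1norm_nonneg mult_right_mono)
      also have "\<dots> \<le> \<bar>K\<bar>"
        using h(3) by (simp add: mult_left_le)
      finally show "y \<le> \<bar>K\<bar>" using K[OF h(2)] h(1) by simp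
    qed
    moreover have "\<bar>F (\<lambda>s. (1 / r) *\<^sub>R g s)\<bar> \<in> S"
      unfolding S_def using r g by (auto simp: L1_scaleR L1norm_scaleR r_def)
    ultimately have "\<bar>F (\<lambda>s. (1 / r) *\<^sub>R g s)\<bar> \<le> L1_dual_norm M F"
      unfolding L1_dual_norm_def S_def by (rule cSup_upper[rotated])
    moreover have "F (\<lambda>s. (1 / r) *\<^sub>R g s) = F g / r"
      using L1_dualD(2)[OF F g] by simp
    ultimately show ?thesis
      using r by (simp add: r_def abs_div field_simps)
  qed
qed

lemma L1_normingI:
  assumes "G \<in> L1_dual M" and bound: "\<And>g. g \<in> L1 M \<Longrightarrow> \<bar>G g\<bar> \<le> L1norm M g"
    and f: "f \<in> L1 M" "L1norm M f \<noteq> 0" and Gf: "G f = L1norm M f"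
  shows "L1_norming M f G"
proof -
  define r where "r = L1norm M f"
  have r: "r > 0" using f(2) L1norm_nonneg[of M f] by (simp add: r_def)
  have "L1_dual_norm M G = 1"
    unfolding L1_dual_norm_def
  proof (rule cSup_eq_maximum)
    have "\<bar>G (\<lambda>s. (1 / r) *\<^sub>R f s)\<bar> = 1"
      using L1_dualD(2)[OF assms(1) f(1)] Gf r by (simp add: r_def)
    then show "1 \<in> {\<bar>G g\<bar> |g. g \<in> L1 M \<and> L1norm M g \<le> 1}"
      using f(1) r by (force simp: L1_scaleR L1norm_scaleR r_def)
  qed (use bound in force)
  with assms show ?thesis
    unfolding L1_norming_def by simp
qed

lemma L1_dual_restrict:
  fixes F :: "('a \<Rightarrow> 'x::real_normed_vector) \<Rightarrow> real"
  assumes F: "F \<in> L1_dual M" and A: "A \<in> sets M"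
  shows "(\<lambda>g. F (\<lambda>s. indicator A s *\<^sub>R g s)) \<in> L1_dual M"
proof -
  obtain K where K: "\<And>g. g \<in> L1 M \<Longrightarrow> \<bar>F g\<bar> \<le> K * L1norm M g"
    using L1_dualD(3)[OF F] by blast
  have "\<bar>F (\<lambda>s. indicator A s *\<^sub>R g s)\<bar> \<le> \<bar>K\<bar> * L1norm M g" if g: "g \<in> L1 M" for g
  proof -
    have "\<bar>F (\<lambda>s. indicator A s *\<^sub>R g s)\<bar> \<le> K * (LINT s:A|M. norm (g s))"
      using K[OF L1_indicator_scaleR[OF g A]] by (simp add: L1norm_indicator_scaleR g A)
    also have "\<dots> \<le> \<bar>K\<bar> * (LINT s:A|M. norm (g s))"
      using L1norm_nonneg[of M "\<lambda>s. indicator A s *\<^sub>R g s"]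
      by (simp add: L1norm_indicator_scaleR[OF g A] mult_right_mono)
    also have "\<dots> \<le> \<bar>K\<bar> * L1norm M g"
      using set_integral_norm_le_L1norm[OF g A] by (simp add: mult_left_mono)
    finally show ?thesis .
  qed
  then show ?thesis
    unfolding L1_dual_def
  proof (intro CollectI conjI ballI allI exI[of _ "\<bar>K\<bar>"])
    fix g h :: "'a \<Rightarrow> 'x" assume g: "g \<in> L1 M" and h: "h \<in> L1 M"
    have "(\<lambda>s. indicator A s *\<^sub>R (g s + h s)) = (\<lambda>s. indicator A s *\<^sub>R g s + indicator A s *\<^sub>R h s)"
      by (simp add: scaleR_add_right)
    then show "F (\<lambda>s. indicator A s *\<^sub>R (g s + h s))
        = F (\<lambda>s. indicator A s *\<^sub>R g s) + F (\<lambda>s. indicator A s *\<^sub>R h s)"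
      using L1_dualD(1)[OF F L1_indicator_scaleR[OF g A] L1_indicator_scaleR[OF h A]] by simp
  next
    fix g :: "'a \<Rightarrow> 'x" and c assume g: "g \<in> L1 M"
    have "(\<lambda>s. indicator A s *\<^sub>R (c *\<^sub>R g s)) = (\<lambda>s. c *\<^sub>R (indicator A s *\<^sub>R g s))"
      by (simp add: ac_simps)
    then show "F (\<lambda>s. indicator A s *\<^sub>R (c *\<^sub>R g s)) = c * F (\<lambda>s. indicator A s *\<^sub>R g s)"
      using L1_dualD(2)[OF F L1_indicator_scaleR[OF g A]] by simp
  qed
qed

lemma bounded_linear_L1_dual_indicator_const:
  fixes F :: "('a \<Rightarrow> 'x::real_normed_vector) \<Rightarrow> real"
  assumes F: "F \<in> L1_dual M" and A: "A \<in> sets M" "emeasure M A < \<infinity>"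
  shows "bounded_linear (\<lambda>v. F (\<lambda>s. indicator A s *\<^sub>R v))"
proof (rule bounded_linear_intro[where K = "L1_dual_norm M F * measure M A"])
  fix v w :: 'x and c :: real
  have "(\<lambda>s. indicator A s *\<^sub>R (v + w)) = (\<lambda>s. indicator A s *\<^sub>R v + indicator A s *\<^sub>R w)"
    by (simp add: scaleR_add_right)
  then show "F (\<lambda>s. indicator A s *\<^sub>R (v + w)) = F (\<lambda>s. indicator A s *\<^sub>R v) + F (\<lambda>s. indicator A s *\<^sub>R w)"
    using L1_dualD(1)[OF F L1_indicator_const[OF A] L1_indicator_const[OF A]] by simp
  have "(\<lambda>s. indicator A s *\<^sub>R (c *\<^sub>R v)) = (\<lambda>s. c *\<^sub>R (indicator A s *\<^sub>R v))"
    by (simp add: ac_simps)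
  then show "F (\<lambda>s. indicator A s *\<^sub>R (c *\<^sub>R v)) = c *\<^sub>R F (\<lambda>s. indicator A s *\<^sub>R v)"
    using L1_dualD(2)[OF F L1_indicator_const[OF A]] by simp
  show "norm (F (\<lambda>s. indicator A s *\<^sub>R v)) \<le> norm v * (L1_dual_norm M F * measure M A)"
    using abs_L1_dual_le[OF F L1_indicator_const[OF A]] by (simp add: L1norm_indicator_const[OF A] ac_simps)
qed

lemma set_integrable_bounded_linear_L1:
  fixes \<phi> :: "'x::real_normed_vector \<Rightarrow> real"
  assumes \<phi>: "bounded_linear \<phi>" and g: "g \<in> L1 M" and C: "C \<in> sets M"
  shows "set_integrable M C (\<lambda>s. \<phi> (g s))"
proof -
  obtain K where K: "\<And>v. norm (\<phi> v) \<le> norm v * K" "K > 0"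
    using bounded_linear.pos_bounded[OF \<phi>] by blast
  have "integrable M (\<lambda>s. \<phi> (g s))"
  proof (rule Bochner_Integration.integrable_bound)
    show "integrable M (\<lambda>s. norm (g s) * K)"
      using integrable_norm_L1[OF g] by simp
    show "(\<lambda>s. \<phi> (g s)) \<in> borel_measurable M"
      using g linear_continuous_at[OF \<phi>] by (auto simp: L1_def intro: borel_measurable_strongly_measurable_comp)
    show "AE s in M. norm (\<phi> (g s)) \<le> norm (norm (g s) * K)"
      using K by (intro AE_I2) (simp add: abs_mult)
  qed
  then show ?thesis
    unfolding set_integrable_def by (rule integrable_mult_indicator[OF C])
qed

lemma abs_set_integral_bounded_linear_le:
  fixes \<phi> :: "'x::real_normed_vector \<Rightarrow> real"
  assumes \<phi>: "bounded_linear \<phi>" and K: "\<And>v. \<bar>\<phi> v\<bar> \<le> K * norm v"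
    and g: "g \<in> L1 M" and C: "C \<in> sets M"
  shows "\<bar>LINT s:C|M. \<phi> (g s)\<bar> \<le> K * (LINT s:C|M. norm (g s))"
proof -
  have "\<bar>LINT s:C|M. \<phi> (g s)\<bar> \<le> (\<integral>s. \<bar>indicator C s *\<^sub>R \<phi> (g s)\<bar> \<partial>M)"
    unfolding set_lebesgue_integral_def by (rule integral_abs_bound)
  also have "\<dots> \<le> (\<integral>s. indicator C s *\<^sub>R (K * norm (g s)) \<partial>M)"
  proof (rule integral_mono)
    show "integrable M (\<lambda>s. \<bar>indicator C s *\<^sub>R \<phi> (g s)\<bar>)"
      using set_integrable_bounded_linear_L1[OF \<phi> g C] unfolding set_integrable_def by (rule integrable_abs)
    show "integrable M (\<lambda>s. indicator C s *\<^sub>R (K * norm (g s)))"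
      using g by (intro integrable_mult_indicator[OF C] integrable_mult_right integrable_norm_L1)
  qed (simp add: K abs_mult split: split_indicator)
  also have "\<dots> = K * (LINT s:C|M. norm (g s))"
    unfolding set_lebesgue_integral_def by (simp add: ac_simps)
  finally show ?thesis .
qed

lemma set_integral_L1_dual:
  fixes \<phi> :: "'x::real_normed_vector \<Rightarrow> real"
  assumes \<phi>: "bounded_linear \<phi>" and C: "C \<in> sets M"
  shows "(\<lambda>g. LINT s:C|M. \<phi> (g s)) \<in> L1_dual M"
proof -
  obtain K where K: "\<And>v. norm (\<phi> v) \<le> norm v * K" "K > 0"
    using bounded_linear.pos_bounded[OF \<phi>] by blast
  have "\<bar>LINT s:C|M. \<phi> (g s)\<bar> \<le> K * L1norm M g" if g: "g \<in> L1 M" for g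
  proof -
    have "\<bar>LINT s:C|M. \<phi> (g s)\<bar> \<le> K * (LINT s:C|M. norm (g s))"
      using K by (intro abs_set_integral_bounded_linear_le[OF \<phi> _ g C]) (simp add: mult.commute)
    also have "\<dots> \<le> K * L1norm M g"
      using K(2) set_integral_norm_le_L1norm[OF g C] by simp
    finally show ?thesis .
  qed
  moreover have "(LINT s:C|M. \<phi> (g s + h s)) = (LINT s:C|M. \<phi> (g s)) + (LINT s:C|M. \<phi> (h s))"
    if "g \<in> L1 M" "h \<in> L1 M" for g h
    unfolding linear_add[OF bounded_linear.linear[OF \<phi>]]
    using that by (intro set_integral_add(2) set_integrable_bounded_linear_L1[OF \<phi> _ C])
  moreover have "(LINT s:C|M. \<phi> (c *\<^sub>R g s)) = c * (LINT s:C|M. \<phi> (g s))" for g c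
    by (simp add: linear_scale[OF bounded_linear.linear[OF \<phi>]])
  ultimately show ?thesis
    unfolding L1_dual_def by blast
qed

end

section \<open>Smooth points of L1\<close>

context complete_measure
begin

lemma L1_norming_restrict_add:
  assumes F: "L1_norming M f F" and f: "f \<in> L1 M" "L1norm M f \<noteq> 0"
    and A: "A \<in> sets M" and f_supp: "AE s in M. s \<notin> A \<longrightarrow> f s = 0"
    and \<Phi>: "\<Phi> \<in> L1_dual M" and \<Phi>_le: "\<And>g. g \<in> L1 M \<Longrightarrow> \<bar>\<Phi> g\<bar> \<le> (LINT s:space M - A|M. norm (g s))"
    and \<Phi>f: "\<Phi> f = 0"
  shows "L1_norming M f (\<lambda>g. F (\<lambda>s. indicator A s *\<^sub>R g s) + \<Phi> g)"
proof (rule L1_normingI)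
  have Fd: "F \<in> L1_dual M" and Fn: "L1_dual_norm M F = 1" and Ff: "F f = L1norm M f"
    using F unfolding L1_norming_def by auto
  show "(\<lambda>g. F (\<lambda>s. indicator A s *\<^sub>R g s) + \<Phi> g) \<in> L1_dual M"
    by (intro L1_dual_add L1_dual_restrict Fd A \<Phi>)
  show "\<bar>F (\<lambda>s. indicator A s *\<^sub>R g s) + \<Phi> g\<bar> \<le> L1norm M g" if g: "g \<in> L1 M" for g
  proof -
    have "\<bar>F (\<lambda>s. indicator A s *\<^sub>R g s)\<bar> \<le> (LINT s:A|M. norm (g s))"
      using abs_L1_dual_le[OF Fd L1_indicator_scaleR[OF g A]] Fn by (simp add: L1norm_indicator_scaleR[OF g A])
    then show ?thesis
      using \<Phi>_le[OF g] L1norm_split[OF g A] by linarith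
  qed
  have "AE s in M. indicator A s *\<^sub>R f s = f s"
    using f_supp by eventually_elim (simp split: split_indicator)
  then have "F (\<lambda>s. indicator A s *\<^sub>R f s) = F f"
    by (rule L1_dual_cong_AE[OF Fd L1_indicator_scaleR[OF f(1) A] f(1)])
  then show "F (\<lambda>s. indicator A s *\<^sub>R f s) + \<Phi> f = L1norm M f"
    using Ff \<Phi>f by simp
qed (use f in auto)

lemma L1_smooth_off_support_functional_eq_0:
  assumes smooth: "L1_smooth M f" and A: "A \<in> sets M" and f_supp: "AE s in M. s \<notin> A \<longrightarrow> f s = 0"
    and \<Phi>: "\<Phi> \<in> L1_dual M" and \<Phi>_le: "\<And>g. g \<in> L1 M \<Longrightarrow> \<bar>\<Phi> g\<bar> \<le> (LINT s:space M - A|M. norm (g s))"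
    and \<Phi>f: "\<Phi> f = 0" and g: "g \<in> L1 M"
  shows "\<Phi> g = 0"
proof -
  obtain F where F: "L1_norming M f F" and f: "f \<in> L1 M" "L1norm M f \<noteq> 0"
    and unique: "\<And>G H. L1_norming M f G \<Longrightarrow> L1_norming M f H \<Longrightarrow> G g = H g"
    using smooth g unfolding L1_smooth_def by blast
  have "L1_norming M f (\<lambda>g. F (\<lambda>s. indicator A s *\<^sub>R g s) + \<Phi> g)"
    by (rule L1_norming_restrict_add[OF F f A f_supp \<Phi> \<Phi>_le \<Phi>f])
  moreover have "L1_norming M f (\<lambda>g. F (\<lambda>s. indicator A s *\<^sub>R g s) + - \<Phi> g)"
    by (rule L1_norming_restrict_add[OF F f A f_supp L1_dual_uminus[OF \<Phi>]]) (use \<Phi>_le \<Phi>f in auto)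
  ultimately have "F (\<lambda>s. indicator A s *\<^sub>R g s) + \<Phi> g = F (\<lambda>s. indicator A s *\<^sub>R g s) + - \<Phi> g"
    by (rule unique)
  then show ?thesis by simp
qed

lemma L1_norming_indicator_const_functional:
  fixes x :: "'x::real_normed_vector"
  assumes F: "L1_norming M f F" and f: "f \<in> L1 M"
    and A: "A \<in> sets M" "emeasure M A < \<infinity>" "measure M A > 0"
    and f_eq: "AE s in M. f s = indicator A s *\<^sub>R x"
  defines "\<phi> \<equiv> \<lambda>v. F (\<lambda>s. indicator A s *\<^sub>R v) / measure M A"
  shows "bounded_linear \<phi>" and "\<And>v. \<bar>\<phi> v\<bar> \<le> norm v" and "\<phi> x = norm x"
proof -
  have Fd: "F \<in> L1_dual M" and Fn: "L1_dual_norm M F = 1" and Ff: "F f = L1norm M f"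
    using F unfolding L1_norming_def by auto
  show "bounded_linear \<phi>"
    unfolding \<phi>_def
    by (rule bounded_linear_compose[OF bounded_linear_divide bounded_linear_L1_dual_indicator_const[OF Fd A(1,2)]])
  show "\<bar>\<phi> v\<bar> \<le> norm v" for v
    using abs_L1_dual_le[OF Fd L1_indicator_const[OF A(1,2)]] A(3) Fn
    by (simp add: \<phi>_def L1norm_indicator_const[OF A(1,2)] abs_div divide_le_eq mult.commute)
  have "AE s in M. indicator A s *\<^sub>R x = f s"
    using f_eq by eventually_elim simp
  then have "F (\<lambda>s. indicator A s *\<^sub>R x) = F f"
    by (rule L1_dual_cong_AE[OF Fd L1_indicator_const[OF A(1,2)] f])
  also have "\<dots> = measure M A * norm x"
    using Ff L1norm_cong_AE[OF f_eq] L1norm_indicator_const[OF A(1,2)] by simp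
  finally show "\<phi> x = norm x"
    using A(3) by (simp add: \<phi>_def)
qed

lemma L1_smooth_set_integral_eq_0:
  fixes f :: "'a \<Rightarrow> 'x::real_normed_vector" and \<phi> :: "'x \<Rightarrow> real"
  assumes smooth: "L1_smooth M f" and A: "A \<in> sets M" "emeasure M A < \<infinity>"
    and f_eq: "AE s in M. f s = indicator A s *\<^sub>R x"
    and \<phi>: "bounded_linear \<phi>" "\<And>v. \<bar>\<phi> v\<bar> \<le> norm v" and g: "g \<in> L1 M"
  shows "(LINT s:space M - A|M. \<phi> (g s)) = 0"
proof -
  define \<Phi> where "\<Phi> = (\<lambda>g. LINT s:space M - A|M. \<phi> (g s))"
  have C: "space M - A \<in> sets M"
    using A(1) by auto
  have \<Phi>: "\<Phi> \<in> L1_dual M"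
    unfolding \<Phi>_def using \<phi>(1) C by (rule set_integral_L1_dual)
  have \<Phi>_le: "\<bar>\<Phi> g\<bar> \<le> (LINT s:space M - A|M. norm (g s))" if "g \<in> L1 M" for g
    using abs_set_integral_bounded_linear_le[OF \<phi>(1) _ that C, of 1] \<phi>(2) by (simp add: \<Phi>_def)
  have f: "f \<in> L1 M"
    using smooth unfolding L1_smooth_def by blast
  have "\<Phi> f = \<Phi> (\<lambda>s. indicator A s *\<^sub>R x)"
    using f_eq by (rule L1_dual_cong_AE[OF \<Phi> f L1_indicator_const[OF A]])
  also have "\<dots> = 0"
    unfolding \<Phi>_def using set_integral_bounded_linear_indicator_const[OF \<phi>(1) A(1) C] by simp
  finally have "\<Phi> f = 0" .
  moreover have "AE s in M. s \<notin> A \<longrightarrow> f s = 0"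
    using f_eq by eventually_elim simp
  ultimately have "\<Phi> g = 0"
    using L1_smooth_off_support_functional_eq_0[OF smooth A(1) _ \<Phi> \<Phi>_le _ g] by blast
  then show ?thesis
    unfolding \<Phi>_def .
qed

lemma L1_smooth_indicator_const_conull:
  fixes x :: "'x::real_normed_vector"
  assumes sf: "sigma_finite_measure M" and smooth: "L1_smooth M f"
    and A: "A \<in> sets M" "emeasure M A < \<infinity>" and f_eq: "AE s in M. f s = indicator A s *\<^sub>R x"
  shows "space M - A \<in> null_sets M"
proof (rule ccontr)
  assume "space M - A \<notin> null_sets M"
  moreover have C: "space M - A \<in> sets M"
    using A(1) by auto
  ultimately have "emeasure M (space M - A) > 0"
    by (auto simp: null_sets_def zero_less_iff_neq_zero)
  then obtain B where B: "B \<in> sets M" "B \<subseteq> space M - A" "emeasure M B > 0" "emeasure M B < \<infinity>"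
    by (rule sigma_finite_measure.obtain_finite_positive_subset[OF sf C])
  obtain F where F: "L1_norming M f F" and f: "f \<in> L1 M" "L1norm M f \<noteq> 0"
    using smooth unfolding L1_smooth_def by blast
  have "L1norm M f = measure M A * norm x"
    using L1norm_cong_AE[OF f_eq] L1norm_indicator_const[OF A] by simp
  then have m: "measure M A > 0" and x: "x \<noteq> 0"
    using f(2) measure_nonneg[of M A] by (auto simp: less_le)
  define \<phi> where "\<phi> = (\<lambda>v. F (\<lambda>s. indicator A s *\<^sub>R v) / measure M A)"
  have \<phi>: "bounded_linear \<phi>" "\<And>v. \<bar>\<phi> v\<bar> \<le> norm v" "\<phi> x = norm x"
    unfolding \<phi>_def using L1_norming_indicator_const_functional[OF F f(1) A m f_eq] by auto
  have "(LINT s:space M - A|M. \<phi> (indicator B s *\<^sub>R x)) = measure M B * norm x"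
    using set_integral_bounded_linear_indicator_const[OF \<phi>(1) B(1)] A(1) B(2) \<phi>(3)
    by (simp add: Int_absorb2)
  moreover have "(LINT s:space M - A|M. \<phi> (indicator B s *\<^sub>R x)) = 0"
    using L1_smooth_set_integral_eq_0[OF smooth A f_eq \<phi>(1,2) L1_indicator_const[OF B(1,4)]] .
  moreover have "measure M B > 0"
    using B(3,4) by (simp add: emeasure_eq_ennreal_measure less_top)
  ultimately show False
    using x by simp
qed

end

section \<open>Left symmetric points\<close>

lemma L1_orth_AE_const_iff:
  assumes f: "AE s in M. f s = x" and g: "AE s in M. g s = y"
    and fin: "emeasure M (space M) < \<infinity>" and pos: "emeasure M (space M) > 0"
  shows "L1_orth M f g \<longleftrightarrow> bj_orth x y"
proof -
  have m: "measure M (space M) > 0"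
    using fin pos by (simp add: emeasure_eq_ennreal_measure less_top)
  have "AE s in M. f s + t *\<^sub>R g s = x + t *\<^sub>R y" for t
    using f g by eventually_elim simp
  then have "L1norm M (\<lambda>s. f s + t *\<^sub>R g s) = measure M (space M) * norm (x + t *\<^sub>R y)" for t
    using fin by (rule L1norm_AE_const)
  moreover have "L1norm M f = measure M (space M) * norm x"
    using f fin by (rule L1norm_AE_const)
  ultimately show ?thesis
    unfolding L1_orth_def bj_orth_def using m by simp
qed

lemma L1_left_symmetric_AE_const:
  fixes f :: "'s \<Rightarrow> 'x::real_normed_vector"
  assumes AE_const: "\<And>g :: 's \<Rightarrow> 'x. g \<in> L1 M \<Longrightarrow> \<exists>c. AE s in M. g s = c"
    and fx: "AE s in M. f s = x" and x: "left_symmetric x"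
    and space: "emeasure M (space M) < \<infinity>" "emeasure M (space M) > 0"
  shows "L1_left_symmetric M f"
  unfolding L1_left_symmetric_def
proof (intro ballI impI)
  fix g :: "'s \<Rightarrow> 'x" assume "g \<in> L1 M" and orth: "L1_orth M f g"
  then obtain y where gy: "AE s in M. g s = y"
    using AE_const by blast
  have "bj_orth x y"
    using orth L1_orth_AE_const_iff[OF fx gy space] by simp
  then have "bj_orth y x"
    using x unfolding left_symmetric_def by blast
  then show "L1_orth M g f"
    using L1_orth_AE_const_iff[OF gy fx space] by simp
qed

theorem theorem3p9:
  fixes M :: "'s measure" and f :: "'s \<Rightarrow> 'x::banach"
  assumes "frechet_diff_norm TYPE('x)"
    and "complete_measure M"
    and "sigma_finite_measure M"
    and "f \<in> L1 M"
    and "L1_smooth M f"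
    and "is_atom M {s \<in> space M. f s \<noteq> 0}"
    and "\<forall>s\<in>space M. left_symmetric (f s)"
  shows "L1_left_symmetric M f"
proof -
  interpret complete_measure M by fact
  interpret sigma_finite_measure M by fact
  define A where "A = {s \<in> space M. f s \<noteq> 0}"
  have atom: "is_atom M A" and A: "A \<in> sets M" "emeasure M A > 0" and fin: "emeasure M A < \<infinity>"
    using assms(6) atom_finite_measure unfolding A_def is_atom_def by auto
  obtain x where x: "AE s in M. s \<in> A \<longrightarrow> f s = x"
    using atom_strongly_measurable_AE_const[OF atom fin] assms(4) unfolding L1_def by blast
  have "AE s in M. f s = indicator A s *\<^sub>R x"
    using x AE_space by eventually_elim (auto simp: A_def split: split_indicator)
  then have "space M - A \<in> null_sets M"
    by (rule L1_smooth_indicator_const_conull[OF assms(3,5) A(1) fin])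
  then have in_A: "AE s in M. s \<in> A"
    by (rule AE_I') auto
  then have "emeasure M (space M) = emeasure M A"
    using A(1) by (intro emeasure_eq_AE) auto
  show ?thesis
  proof (rule L1_left_symmetric_AE_const)
    show "\<exists>c. AE s in M. g s = c" if "g \<in> L1 M" for g
      using strongly_measurable_AE_const_conull_atom[OF atom fin in_A] that unfolding L1_def by blast
    show "AE s in M. f s = x"
      using x in_A by eventually_elim blast
    show "left_symmetric x"
      using AE_imp_ex_in[OF x A] assms(7) unfolding A_def by auto
  qed (use \<open>emeasure M (space M) = emeasure M A\<close> A fin in simp_all)
qed

end
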